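(* Let $P=\operatorname{conv}(W(\Lambda))$ be a full-dimensional $W$-symmetric polytope, let $F$ be a face of $P$, and let $\alpha\in R$. The following are equivalent: (1) $r_\alpha(F)=F$; (2) the hyperplane $H_\alpha$ passes through the barycenter of $F$; (3) $H_\alpha$ passes through a relative interior point of $F$. If moreover $P$ is non-degenerate, these are also equivalent to: (4) $F\cap H_\alpha\neq\emptyset$; and in that case (when $P$ is non-degenerate and the conditions hold), $\langle \ell_{F'},\alpha\rangle=0$ for every facet $F'$ of $P$ containing $F$.
   Context: $V$ is a real Euclidean space of dimension $n$, $R\subset V$ a reduced root system spanning $V$ (not necessarily crystallographic) with simple system $S=\{\alpha_1,\dots,\alpha_n\}$; $r_\alpha(x)=x-\frac{2\langle x,\alpha\rangle}{\langle \alpha,\alpha\rangle}\alpha$, $H_\alpha$ is the hyperplane fixed pointwise by $r_\alpha$, and $W$ is the group generated by the $r_{\alpha_i}$. $C_S=\{x:\langle x,\alpha_i\rangle\ge0\ \forall i\}$, $\Lambda\subset C_S$ finite. $P$ is non-degenerate if no vertex of $P$ lies on the boundary of $C_S$. $\ell_{F'}$ denotes an outward normal vector of the facet $F'$. *)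

theory Defs
  imports "HOL-Analysis.Analysis"
begin

definition root_refl :: "'a::euclidean_space \<Rightarrow> 'a \<Rightarrow> 'a" where
  "root_refl a x = x - (2 * (x \<bullet> a) / (a \<bullet> a)) *\<^sub>R a"

definition hyp :: "'a::euclidean_space \<Rightarrow> 'a set" where
  "hyp a = {x. x \<bullet> a = 0}"

text \<open>Reduced (not necessarily crystallographic) root system spanning V.\<close>
definition root_system :: "'a::euclidean_space set \<Rightarrow> bool" where
  "root_system R \<longleftrightarrow> finite R \<and> 0 \<notin> R \<and> span R = UNIV
     \<and> (\<forall>a\<in>R. \<forall>c::real. c *\<^sub>R a \<in> R \<longleftrightarrow> (c = 1 \<or> c = -1))
     \<and> (\<forall>a\<in>R. \<forall>b\<in>R. root_refl a b \<in> R)"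

definition simple_system :: "'a::euclidean_space set \<Rightarrow> 'a set \<Rightarrow> bool" where
  "simple_system R S \<longleftrightarrow> S \<subseteq> R \<and> independent S
     \<and> (\<forall>b\<in>R. \<exists>c. b = (\<Sum>s\<in>S. c s *\<^sub>R s) \<and> ((\<forall>s\<in>S. c s \<ge> 0) \<or> (\<forall>s\<in>S. c s \<le> 0)))"

inductive_set weyl_group :: "'a::euclidean_space set \<Rightarrow> ('a \<Rightarrow> 'a) set" for S where
  id: "id \<in> weyl_group S"
| step: "s \<in> S \<Longrightarrow> w \<in> weyl_group S \<Longrightarrow> root_refl s \<circ> w \<in> weyl_group S"

definition fund_chamber :: "'a::euclidean_space set \<Rightarrow> 'a set" where
  "fund_chamber S = {x. \<forall>s\<in>S. x \<bullet> s \<ge> 0}"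

definition barycenter :: "'a::euclidean_space set \<Rightarrow> 'a" where
  "barycenter F = (1 / real (card {v. v extreme_point_of F})) *\<^sub>R (\<Sum>{v. v extreme_point_of F})"

definition nondegenerate :: "'a::euclidean_space set \<Rightarrow> 'a set \<Rightarrow> bool" where
  "nondegenerate S P \<longleftrightarrow> (\<forall>v. v extreme_point_of P \<longrightarrow> v \<notin> frontier (fund_chamber S))"

definition outward_normal :: "'a::euclidean_space \<Rightarrow> 'a set \<Rightarrow> 'a set \<Rightarrow> bool" where
  "outward_normal l F P \<longleftrightarrow> l \<noteq> 0 \<and> (\<exists>b. P \<subseteq> {x. l \<bullet> x \<le> b} \<and> F = P \<inter> {x. l \<bullet> x = b})"

end

theory Submission
  imports Defs
begin

text \<open>Every root is Weyl-conjugate to a simple root up to sign, so r_\<alpha> is conjugate to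
  a generator of W and preserves the W-invariant polytope P. Hence r_\<alpha> F is again a face
  of P, and two faces coincide as soon as their relative interiors meet; since the barycenter
  is a relative interior point fixed by every linear symmetry of F, conditions (1)--(3) are
  equivalent. A vertex w \<lambda> of P on H_\<alpha> would give a vertex \<lambda> of P on H_(w\<inverse> \<alpha>), i.e.
  on a wall of the chamber. So for non-degenerate P the vertices of a face meeting H_\<alpha> lie
  strictly on both sides, and the segment from a relative interior point to a vertex on the
  other side crosses H_\<alpha> inside the relative interior. Finally, if \<ell> is not orthogonal to
  \<alpha>, an r_\<alpha>-stable facet lies in H_\<alpha> and spans it, so H_\<alpha> is its supporting hyperplane;
  as P and r_\<alpha> P lie on the same side of it, P would lie in H_\<alpha>, contradicting full
  dimension.\<close>

section \<open>Reflections and the Weyl group\<close>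

lemma linear_root_refl: "linear (root_refl a)"
  unfolding root_refl_def
  by (rule linearI) (auto simp: algebra_simps inner_add_left add_divide_distrib)

lemma root_refl_inner_root: "root_refl a x \<bullet> a = - (x \<bullet> a)"
  by (cases "a = 0") (simp_all add: root_refl_def inner_diff_left)

lemma root_refl_root_refl [simp]: "root_refl a (root_refl a x) = x"
  by (cases "a = 0")
     (simp_all add: root_refl_def root_refl_inner_root[unfolded root_refl_def] algebra_simps)

lemma orthogonal_transformation_root_refl: "orthogonal_transformation (root_refl a)"
  unfolding orthogonal_transformation_def
  by (simp add: linear_root_refl root_refl_def inner_diff_left inner_diff_right algebra_simps
      inner_commute power2_eq_square)

lemma root_refl_eq_self_iff: "root_refl a x = x \<longleftrightarrow> x \<in> hyp a"
  by (auto simp: root_refl_def hyp_def)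

lemma root_refl_uminus: "root_refl (- a) = root_refl a"
  by (auto simp: root_refl_def fun_eq_iff)

lemma root_refl_orthogonal_transformation_comp:
  assumes "orthogonal_transformation w"
  shows "root_refl (w b) \<circ> w = w \<circ> root_refl b"
  using assms
  by (simp add: fun_eq_iff root_refl_def orthogonal_transformation_def linear_diff linear_scale)

lemma add_root_refl_in_hyp: "x + root_refl a x \<in> hyp a"
  by (simp add: hyp_def inner_add_left root_refl_inner_root)

lemma root_refl_in_weyl_group: "s \<in> S \<Longrightarrow> root_refl s \<in> weyl_group S"
  using weyl_group.step[OF _ weyl_group.id] by fastforce

lemma orthogonal_transformation_weyl_group:
  "w \<in> weyl_group S \<Longrightarrow> orthogonal_transformation w"
  by (induction w rule: weyl_group.induct)
     (auto simp only: id_def orthogonal_transformation_id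
       intro: orthogonal_transformation_compose orthogonal_transformation_root_refl)

lemma weyl_group_image_subset:
  assumes "w \<in> weyl_group S" "\<And>s. s \<in> S \<Longrightarrow> root_refl s ` A \<subseteq> A"
  shows "w ` A \<subseteq> A"
  using assms by (induction w rule: weyl_group.induct) (auto simp: image_comp[symmetric])

lemma weyl_group_image_eq:
  assumes "w \<in> weyl_group S" "\<And>s. s \<in> S \<Longrightarrow> root_refl s ` A \<subseteq> A" "finite A"
  shows "w ` A = A"
  using assms weyl_group_image_subset
    orthogonal_transformation_inj[OF orthogonal_transformation_weyl_group]
  by (metis endo_inj_surj inj_on_subset subset_UNIV)

definition weyl_orbit :: "'a::euclidean_space set \<Rightarrow> 'a set \<Rightarrow> 'a set" where
  "weyl_orbit S \<Lambda> = (\<Union>w\<in>weyl_group S. w ` \<Lambda>)"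

lemma finite_weyl_orbit: "finite (weyl_group S) \<Longrightarrow> finite \<Lambda> \<Longrightarrow> finite (weyl_orbit S \<Lambda>)"
  by (simp add: weyl_orbit_def)

lemma weyl_group_image_weyl_orbit_hull:
  assumes "w \<in> weyl_group S" "finite (weyl_group S)" "finite \<Lambda>"
  shows "w ` (convex hull weyl_orbit S \<Lambda>) = convex hull weyl_orbit S \<Lambda>"
proof -
  have "root_refl s ` weyl_orbit S \<Lambda> \<subseteq> weyl_orbit S \<Lambda>" if "s \<in> S" for s
    unfolding weyl_orbit_def image_UN image_comp
    by (intro UN_least UN_upper weyl_group.step[OF that])
  then have "w ` weyl_orbit S \<Lambda> = weyl_orbit S \<Lambda>"
    using weyl_group_image_eq[OF assms(1)] finite_weyl_orbit assms(2,3) by blast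
  then show ?thesis
    by (metis convex_hull_linear_image orthogonal_transformation_linear
        orthogonal_transformation_weyl_group[OF assms(1)])
qed

lemma fund_chamber_frontier:
  assumes "s \<in> S" "s \<noteq> 0" "x \<in> fund_chamber S" "x \<bullet> s = 0"
  shows "x \<in> frontier (fund_chamber S)"
proof -
  have "fund_chamber S = (\<Inter>t\<in>S. {y. t \<bullet> y \<ge> 0})"
    by (auto simp: fund_chamber_def inner_commute)
  then have "closed (fund_chamber S)" by (simp add: closed_INT closed_halfspace_ge)
  have "fund_chamber S \<subseteq> {y. s \<bullet> y \<ge> 0}"
    using assms(1) by (auto simp: fund_chamber_def inner_commute)
  then have "interior (fund_chamber S) \<subseteq> {y. s \<bullet> y > 0}"
    by (metis interior_mono interior_halfspace_ge assms(2))
  then have "x \<notin> interior (fund_chamber S)" using assms(4) by (auto simp: inner_commute)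
  with \<open>closed (fund_chamber S)\<close> show ?thesis
    using assms(3) by (simp add: frontier_def closure_closed)
qed

section \<open>Faces of polytopes\<close>

lemma extreme_point_of_linear_image:
  assumes "linear f" "inj f"
  shows "f x extreme_point_of f ` S \<longleftrightarrow> x extreme_point_of S"
  using face_of_linear_image[OF assms, of "{x}" S] by (simp add: face_of_singleton)

lemma extreme_points_of_linear_image:
  assumes "linear f" "inj f"
  shows "{v. v extreme_point_of f ` S} = f ` {v. v extreme_point_of S}"
proof -
  have "v \<in> f ` {v. v extreme_point_of S}" if v: "v extreme_point_of f ` S" for v
  proof -
    obtain x where "v = f x" using v by (auto simp: extreme_point_of_def)
    then show ?thesis using v extreme_point_of_linear_image[OF assms] by blast
  qed
  then show ?thesis using extreme_point_of_linear_image[OF assms] by auto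
qed

lemma barycenter_linear_image:
  assumes "linear f" "inj f"
  shows "barycenter (f ` F) = f (barycenter F)"
proof -
  let ?E = "{v. v extreme_point_of F}"
  have "card (f ` ?E) = card ?E" "\<Sum>(f ` ?E) = (\<Sum>v\<in>?E. f v)"
    using assms(2) by (simp_all add: card_image sum.reindex inj_on_subset)
  then show ?thesis
    unfolding barycenter_def extreme_points_of_linear_image[OF assms]
    using assms(1) by (simp add: linear_sum linear_scale)
qed

lemma polytope_eq_convex_hull_extreme_points:
  fixes F :: "'a::euclidean_space set"
  assumes "polytope F"
  shows "F = convex hull {v. v extreme_point_of F}"
  using Krein_Milman_Minkowski polytope_imp_compact[OF assms] polytope_imp_convex[OF assms] .

lemma barycenter_in_rel_interior:
  assumes "polytope F" "F \<noteq> {}"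
  shows "barycenter F \<in> rel_interior F"
proof -
  define E where "E = {v. v extreme_point_of F}"
  obtain V where "finite V" "F = convex hull V" using assms(1) polytope_def by blast
  then have "finite E" unfolding E_def using extreme_points_of_convex_hull finite_subset by metis
  have F: "F = convex hull E"
    unfolding E_def using polytope_eq_convex_hull_extreme_points[OF assms(1)] .
  with assms(2) \<open>finite E\<close> have "card E > 0" by (auto simp: card_gt_0_iff)
  then have "barycenter F \<in> {y. \<exists>u. (\<forall>x\<in>E. 0 < u x) \<and> sum u E = 1 \<and> (\<Sum>x\<in>E. u x *\<^sub>R x) = y}"
    by (intro CollectI exI[of _ "\<lambda>_. 1 / real (card E)"])
       (auto simp: barycenter_def E_def[symmetric] scaleR_sum_right)
  then show ?thesis
    using explicit_subset_rel_interior_convex_hull_minimal[OF \<open>finite E\<close>] F by blast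
qed

lemma face_image_eq_iff_fixes_barycenter:
  assumes "polytope P" "linear f" "inj f" "f ` P = P" "F face_of P" "F \<noteq> {}"
  shows "f ` F = F \<longleftrightarrow> f (barycenter F) = barycenter F"
    and "f (barycenter F) = barycenter F \<longleftrightarrow> (\<exists>x\<in>rel_interior F. f x = x)"
proof -
  have bary: "barycenter F \<in> rel_interior F"
    using barycenter_in_rel_interior face_of_polytope_polytope assms(1,5,6) by blast
  have stable: "f ` F = F" if "x \<in> rel_interior F" "f x = x" for x
  proof -
    have "rel_interior (f ` F) = f ` rel_interior F"
      using rel_interior_injective_linear_image assms(2,3) linear_conv_bounded_linear by blast
    then have "x \<in> rel_interior (f ` F)" using that by (metis imageI)
    moreover have "f ` F face_of P" using face_of_linear_image[OF assms(2,3)] assms(4,5) by metis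
    ultimately show ?thesis using face_of_eq assms(5) that(1) by blast
  qed
  show "f ` F = F \<longleftrightarrow> f (barycenter F) = barycenter F"
    using barycenter_linear_image[OF assms(2,3)] stable bary by metis
  show "f (barycenter F) = barycenter F \<longleftrightarrow> (\<exists>x\<in>rel_interior F. f x = x)"
    using barycenter_linear_image[OF assms(2,3)] stable bary by metis
qed

lemma rel_interior_meets_hyp_between:
  assumes "convex F" "y \<in> rel_interior F" "v \<in> F" "(y \<bullet> a) * (v \<bullet> a) < 0"
  shows "rel_interior F \<inter> hyp a \<noteq> {}"
proof -
  define u where "u = (y \<bullet> a) / (y \<bullet> a - v \<bullet> a)"
  define p where "p = (1 - u) *\<^sub>R y + u *\<^sub>R v"
  have "0 < u" "u < 1"
    using assms(4) by (auto simp: u_def mult_less_0_iff divide_less_eq zero_less_divide_iff)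
  moreover have "y \<noteq> v" using assms(4) by (auto simp: mult_less_0_iff)
  ultimately have "p \<in> open_segment y v" unfolding in_segment p_def by blast
  then have "p \<in> rel_interior F"
    using rel_interior_closure_convex_segment[OF assms(1,2)] assms(3) closure_subset by blast
  have "y \<bullet> a - v \<bullet> a \<noteq> 0" using assms(4) by (auto simp: mult_less_0_iff)
  then have "u * (y \<bullet> a - v \<bullet> a) = y \<bullet> a" by (simp add: u_def)
  then have "p \<in> hyp a" by (simp add: p_def hyp_def inner_add_left algebra_simps)
  with \<open>p \<in> rel_interior F\<close> show ?thesis by blast
qed

lemma polytope_rel_interior_meets_hyp:
  assumes "polytope F" "F \<inter> hyp a \<noteq> {}" and vertices: "\<And>v. v extreme_point_of F \<Longrightarrow> v \<notin> hyp a"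
  shows "rel_interior F \<inter> hyp a \<noteq> {}"
proof -
  obtain x where x: "x \<in> F" "x \<bullet> a = 0" using assms(2) by (auto simp: hyp_def)
  have "convex F" using assms(1) polytope_imp_convex by blast
  then obtain y where y: "y \<in> rel_interior F" using x(1) rel_interior_eq_empty by blast
  show ?thesis
  proof (cases "y \<bullet> a = 0")
    case True
    then show ?thesis using y by (auto simp: hyp_def)
  next
    case False
    have "\<exists>v. v extreme_point_of F \<and> (y \<bullet> a) * (v \<bullet> a) < 0"
    proof (rule ccontr)
      assume no_opposite: "\<not> ?thesis"
      have "0 < (y \<bullet> a) * (v \<bullet> a)" if "v extreme_point_of F" for v
      proof -
        have "(y \<bullet> a) * (v \<bullet> a) \<noteq> 0" using False vertices[OF that] by (simp add: hyp_def)
        moreover have "\<not> (y \<bullet> a) * (v \<bullet> a) < 0" using no_opposite that by blast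
        ultimately show ?thesis by linarith
      qed
      then have "{v. v extreme_point_of F} \<subseteq> {z. 0 < ((y \<bullet> a) *\<^sub>R a) \<bullet> z}"
        by (auto simp: inner_commute)
      then have "convex hull {v. v extreme_point_of F} \<subseteq> {z. 0 < ((y \<bullet> a) *\<^sub>R a) \<bullet> z}"
        by (rule hull_minimal) (rule convex_halfspace_gt)
      then have "F \<subseteq> {z. 0 < ((y \<bullet> a) *\<^sub>R a) \<bullet> z}"
        unfolding polytope_eq_convex_hull_extreme_points[OF assms(1), symmetric] .
      then have "0 < (y \<bullet> a) * (a \<bullet> x)" using x(1) by auto
      then show False using x(2) by (simp add: inner_commute)
    qed
    then obtain v where "v extreme_point_of F" "(y \<bullet> a) * (v \<bullet> a) < 0" by blast
    then show ?thesis
      using rel_interior_meets_hyp_between[OF \<open>convex F\<close> y] extreme_point_of_def by blast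
  qed
qed

lemma reflection_stable_subset_hyp:
  assumes "root_refl a ` F = F" "F \<subseteq> {x. l \<bullet> x = b}" "l \<bullet> a \<noteq> 0"
  shows "F \<subseteq> hyp a"
proof
  fix x assume "x \<in> F"
  then have "l \<bullet> root_refl a x = l \<bullet> x" using assms(1,2) by blast
  then have "(2 * (x \<bullet> a) / (a \<bullet> a)) * (l \<bullet> a) = 0"
    by (simp add: root_refl_def inner_diff_right)
  then show "x \<in> hyp a" using assms(3) by (auto simp: hyp_def)
qed

lemma facet_affine_hull_eq_hyp:
  assumes "aff_dim P = DIM('a)" "F facet_of P" "a \<noteq> 0" "F \<subseteq> hyp (a::'a::euclidean_space)"
  shows "affine hull F = hyp a"
proof (rule affine_dim_equal)
  have hyp: "hyp a = {x. a \<bullet> x = 0}" by (auto simp: hyp_def inner_commute)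
  show "affine (hyp a)" unfolding hyp by (rule affine_hyperplane)
  show "affine hull F \<subseteq> hyp a" using assms(4) \<open>affine (hyp a)\<close> by (rule hull_minimal)
  show "affine hull F \<noteq> {}" using assms(2) by (simp add: facet_of_def)
  show "aff_dim (affine hull F) = aff_dim (hyp a)"
    using assms(1-3) unfolding hyp by (simp add: facet_of_def)
qed simp

lemma reflection_stable_facet_normal_orthogonal:
  assumes full: "aff_dim P = DIM('a)" and "a \<noteq> 0" "root_refl a ` P = P"
    and facet: "F facet_of P" "root_refl a ` F = F" "outward_normal l F P"
  shows "l \<bullet> (a::'a::euclidean_space) = 0"
proof (rule ccontr)
  assume "l \<bullet> a \<noteq> 0"
  obtain b where b: "P \<subseteq> {x. l \<bullet> x \<le> b}" "F = P \<inter> {x. l \<bullet> x = b}" and "l \<noteq> 0"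
    using facet(3) by (auto simp: outward_normal_def)
  have "F \<subseteq> hyp a" using reflection_stable_subset_hyp facet(2) b(2) \<open>l \<bullet> a \<noteq> 0\<close> by blast
  then have "hyp a = affine hull F" using facet_affine_hull_eq_hyp full facet(1) \<open>a \<noteq> 0\<close> by metis
  also have "\<dots> \<subseteq> {x. l \<bullet> x = b}" using b(2) by (intro hull_minimal) (auto simp: affine_hyperplane)
  finally have hyp_level: "hyp a \<subseteq> {x. l \<bullet> x = b}" .
  moreover have "0 \<in> hyp a" by (simp add: hyp_def)
  ultimately have "b = 0" by auto
  with b(1) have below: "P \<subseteq> {x. l \<bullet> x \<le> 0}" by simp
  have "P \<subseteq> {x. l \<bullet> x = 0}"
  proof
    fix p assume p: "p \<in> P"
    then have rp: "root_refl a p \<in> P" by (metis assms(3) imageI)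
    have "l \<bullet> p \<le> 0" using subsetD[OF below p] by simp
    moreover have "l \<bullet> root_refl a p \<le> 0" using subsetD[OF below rp] by simp
    moreover have "p + root_refl a p \<in> {x. l \<bullet> x = b}"
      using hyp_level add_root_refl_in_hyp by (rule subsetD)
    ultimately show "p \<in> {x. l \<bullet> x = 0}" using \<open>b = 0\<close> by (simp add: inner_add_right)
  qed
  then have "aff_dim P \<le> aff_dim {x. l \<bullet> x = 0}" by (rule aff_dim_subset)
  also have "\<dots> = int DIM('a) - 1" using \<open>l \<noteq> 0\<close> by simp
  finally show False using full by linarith
qed

lemma reflection_stable_face_iff:
  assumes "polytope P" "root_refl a ` P = P" "F face_of P" "F \<noteq> {}"
  shows "root_refl a ` F = F \<longleftrightarrow> barycenter F \<in> hyp a"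
    and "barycenter F \<in> hyp a \<longleftrightarrow> rel_interior F \<inter> hyp a \<noteq> {}"
  using face_image_eq_iff_fixes_barycenter[OF assms(1) linear_root_refl _ assms(2-4)]
    orthogonal_transformation_inj[OF orthogonal_transformation_root_refl]
  by (auto simp: root_refl_eq_self_iff)

lemma face_rel_interior_meets_hyp_iff:
  assumes "polytope P" "F face_of P" "\<And>v. v extreme_point_of P \<Longrightarrow> v \<notin> hyp a"
  shows "rel_interior F \<inter> hyp a \<noteq> {} \<longleftrightarrow> F \<inter> hyp a \<noteq> {}"
  using polytope_rel_interior_meets_hyp[of F a] face_of_polytope_polytope[OF assms(1,2)]
    extreme_point_of_face[OF assms(2)] assms(3) rel_interior_subset
  by blast

lemma reflection_stable_face_facet_normal_orthogonal:
  assumes "aff_dim P = DIM('a)" "polytope P" "a \<noteq> 0" "root_refl a ` P = P"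
    and "F face_of P" "F \<noteq> {}" "\<And>v. v extreme_point_of P \<Longrightarrow> v \<notin> hyp a"
    and "root_refl a ` F = F" "F' facet_of P" "F \<subseteq> F'" "outward_normal l F' P"
  shows "l \<bullet> (a::'a::euclidean_space) = 0"
proof -
  have "barycenter F \<in> rel_interior F \<inter> hyp a"
    using reflection_stable_face_iff(1)[OF assms(2,4-6)] assms(8)
      barycenter_in_rel_interior face_of_polytope_polytope assms(2,5,6) by blast
  then have "F' \<inter> hyp a \<noteq> {}" using assms(10) rel_interior_subset by blast
  moreover have F': "F' face_of P" "F' \<noteq> {}" using assms(9) by (auto simp: facet_of_def)
  ultimately have "root_refl a ` F' = F'"
    using face_rel_interior_meets_hyp_iff[OF assms(2) F'(1) assms(7)]
      reflection_stable_face_iff[OF assms(2,4) F'] by blast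
  then show ?thesis using reflection_stable_facet_normal_orthogonal assms(1,3,4,9,11) by blast
qed

section \<open>Root systems\<close>

lemma independent_sum_scaleR_coeffs_eq:
  fixes B :: "'a::euclidean_space set"
  assumes "independent B" "(\<Sum>v\<in>B. c v *\<^sub>R v) = (\<Sum>v\<in>B. d v *\<^sub>R v)" "v \<in> B"
  shows "c v = d v"
proof -
  have "(\<Sum>v\<in>B. (c v - d v) *\<^sub>R v) = 0"
    using assms(2) by (simp add: scaleR_diff_left sum_subtractf)
  then have "\<forall>v\<in>B. c v - d v = 0"
    using independent_explicit[THEN iffD1, OF assms(1), THEN conjunct2,
        THEN spec[where x = "\<lambda>v. c v - d v"]] by simp
  then show ?thesis using assms(3) by simp
qed

locale simple_root_system =
  fixes R S :: "'a::euclidean_space set"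
  assumes root_system: "root_system R" and simple_system: "simple_system R S"
begin

lemma finite_R: "finite R" and zero_notin_R: "0 \<notin> R" and span_R: "span R = UNIV"
  and root_refl_in_R: "\<alpha> \<in> R \<Longrightarrow> \<beta> \<in> R \<Longrightarrow> root_refl \<alpha> \<beta> \<in> R"
  and scaleR_in_R_iff: "\<alpha> \<in> R \<Longrightarrow> c *\<^sub>R \<alpha> \<in> R \<longleftrightarrow> c = 1 \<or> c = -1"
  using root_system by (auto simp: root_system_def)

lemma S_subset_R: "S \<subseteq> R" and independent_S: "independent S"
  and root_decomposition:
    "\<alpha> \<in> R \<Longrightarrow> \<exists>c. \<alpha> = (\<Sum>s\<in>S. c s *\<^sub>R s) \<and> ((\<forall>s\<in>S. 0 \<le> c s) \<or> (\<forall>s\<in>S. c s \<le> 0))"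
  using simple_system by (auto simp: simple_system_def)

lemma finite_S: "finite S"
  using independent_S independent_bound by blast

lemma root_refl_simple_image_R: "s \<in> S \<Longrightarrow> root_refl s ` R \<subseteq> R"
  using root_refl_in_R S_subset_R by auto

lemma uminus_in_R: "\<alpha> \<in> R \<Longrightarrow> - \<alpha> \<in> R"
  using scaleR_in_R_iff[of \<alpha> "-1"] by simp

definition positive_root :: "'a \<Rightarrow> bool" where
  "positive_root \<beta> \<longleftrightarrow> \<beta> \<in> R \<and> (\<exists>c. \<beta> = (\<Sum>s\<in>S. c s *\<^sub>R s) \<and> (\<forall>s\<in>S. 0 \<le> c s))"

lemma positive_root_or_uminus: "\<alpha> \<in> R \<Longrightarrow> positive_root \<alpha> \<or> positive_root (- \<alpha>)"
proof -
  assume "\<alpha> \<in> R"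
  then obtain c where c: "\<alpha> = (\<Sum>s\<in>S. c s *\<^sub>R s)" "(\<forall>s\<in>S. 0 \<le> c s) \<or> (\<forall>s\<in>S. c s \<le> 0)"
    using root_decomposition by blast
  have "- \<alpha> = (\<Sum>s\<in>S. (- c s) *\<^sub>R s)" using c(1) by (simp add: sum_negf)
  then show ?thesis
    using c \<open>\<alpha> \<in> R\<close> uminus_in_R unfolding positive_root_def by (metis neg_0_le_iff_le)
qed

lemma root_supported_at_simple_root:
  assumes "\<beta> \<in> R" "\<beta> = (\<Sum>t\<in>S. c t *\<^sub>R t)" "s \<in> S" "\<forall>t\<in>S - {s}. c t = 0" "0 \<le> c s"
  shows "\<beta> = s"
proof -
  have "\<beta> = c s *\<^sub>R s" using assms(2-4) finite_S by (simp add: sum.remove[of S s])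
  then have "c s = 1 \<or> c s = -1" using scaleR_in_R_iff assms(1,3) S_subset_R by blast
  then show ?thesis using assms(5) \<open>\<beta> = c s *\<^sub>R s\<close> by auto
qed

lemma root_refl_simple_positive_root:
  assumes "positive_root \<beta>" "s \<in> S" "\<beta> \<noteq> s"
  shows "positive_root (root_refl s \<beta>)"
proof -
  obtain c where c: "\<beta> \<in> R" "\<beta> = (\<Sum>t\<in>S. c t *\<^sub>R t)" "\<forall>t\<in>S. 0 \<le> c t"
    using assms(1) positive_root_def by blast
  obtain t where t: "t \<in> S" "t \<noteq> s" "0 < c t"
    using root_supported_at_simple_root[OF c(1,2) assms(2)] c(3) assms(2,3) by force
  define k where "k = 2 * (\<beta> \<bullet> s) / (s \<bullet> s)"
  have "(\<Sum>u\<in>S. (if u = s then k else 0) *\<^sub>R u) = (\<Sum>u\<in>S. if u = s then k *\<^sub>R u else 0)"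
    by (rule sum.cong) auto
  then have refl: "root_refl s \<beta> = (\<Sum>u\<in>S. (c u - (if u = s then k else 0)) *\<^sub>R u)"
    using c(2) assms(2) finite_S
    by (simp add: root_refl_def k_def scaleR_diff_left sum_subtractf)
  have "root_refl s \<beta> \<in> R" using root_refl_in_R S_subset_R assms(2) c(1) by blast
  then obtain e where e: "root_refl s \<beta> = (\<Sum>u\<in>S. e u *\<^sub>R u)" "(\<forall>u\<in>S. 0 \<le> e u) \<or> (\<forall>u\<in>S. e u \<le> 0)"
    using root_decomposition by blast
  have "(\<Sum>u\<in>S. e u *\<^sub>R u) = (\<Sum>u\<in>S. (c u - (if u = s then k else 0)) *\<^sub>R u)"
    using refl e(1) by simp
  then have "e t = c t - (if t = s then k else 0)"
    by (rule independent_sum_scaleR_coeffs_eq[OF independent_S _ t(1)])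
  then have "e t = c t" using t(2) by simp
  then have "\<forall>u\<in>S. 0 \<le> e u" using e(2) t by force
  then show ?thesis using e(1) \<open>root_refl s \<beta> \<in> R\<close> unfolding positive_root_def by blast
qed

lemma positive_root_inner_simple_root_pos:
  assumes "positive_root \<beta>"
  shows "\<exists>s\<in>S. 0 < s \<bullet> \<beta>"
proof (rule ccontr)
  assume neg: "\<not> ?thesis"
  obtain c where c: "\<beta> \<in> R" "\<beta> = (\<Sum>t\<in>S. c t *\<^sub>R t)" "\<forall>t\<in>S. 0 \<le> c t"
    using assms positive_root_def by blast
  have "0 < \<beta> \<bullet> \<beta>" using c(1) zero_notin_R by auto
  also have "\<beta> \<bullet> \<beta> = (\<Sum>t\<in>S. c t * (t \<bullet> \<beta>))"
    by (subst (1) c(2)) (simp add: inner_sum_left)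
  also have "\<dots> \<le> 0" using c(3) neg by (intro sum_nonpos) (auto simp: mult_nonneg_nonpos)
  finally show False by simp
qed

lemma positive_root_conj_simple_root:
  assumes "positive_root \<beta>"
  shows "\<exists>w\<in>weyl_group S. \<exists>s\<in>S. \<beta> = w s"
proof -
  obtain ht :: "'a \<Rightarrow> real" where ht: "linear ht" "\<And>s. s \<in> S \<Longrightarrow> ht s = 1"
    using real_vector.linear_independent_extend[OF independent_S, of "\<lambda>_. 1"] by blast
  txt \<open>ht is a height function; reflecting in a simple root s with 0 < s \<bullet> \<beta>
    lowers the height of \<beta>.\<close>
  show ?thesis
    using assms
  proof (induction "card {\<gamma>\<in>R. ht \<gamma> < ht \<beta>}" arbitrary: \<beta> rule: less_induct)
    case less
    show ?case
    proof (cases "\<beta> \<in> S")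
      case True
      then show ?thesis using weyl_group.id[of S] by (metis id_apply)
    next
      case False
      obtain s where s: "s \<in> S" "0 < s \<bullet> \<beta>"
        using positive_root_inner_simple_root_pos less.prems by blast
      let ?\<gamma> = "root_refl s \<beta>"
      have \<gamma>: "positive_root ?\<gamma>"
        using root_refl_simple_positive_root less.prems s(1) False by blast
      have "s \<noteq> 0" using s(2) by auto
      then have "0 < 2 * (\<beta> \<bullet> s) / (s \<bullet> s)"
        using s(2) by (intro divide_pos_pos) (simp_all add: inner_commute)
      moreover have "ht ?\<gamma> = ht \<beta> - 2 * (\<beta> \<bullet> s) / (s \<bullet> s)"
        using ht s(1) by (simp add: root_refl_def linear_diff linear_scale)
      ultimately have "ht ?\<gamma> < ht \<beta>" by linarith
      then have "{\<gamma>\<in>R. ht \<gamma> < ht ?\<gamma>} \<subseteq> {\<gamma>\<in>R. ht \<gamma> < ht \<beta>}" by auto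
      moreover have "?\<gamma> \<in> {\<gamma>\<in>R. ht \<gamma> < ht \<beta>} - {\<gamma>\<in>R. ht \<gamma> < ht ?\<gamma>}"
        using \<gamma> \<open>ht ?\<gamma> < ht \<beta>\<close> by (simp add: positive_root_def)
      ultimately have "{\<gamma>\<in>R. ht \<gamma> < ht ?\<gamma>} \<subset> {\<gamma>\<in>R. ht \<gamma> < ht \<beta>}" by blast
      then have "card {\<gamma>\<in>R. ht \<gamma> < ht ?\<gamma>} < card {\<gamma>\<in>R. ht \<gamma> < ht \<beta>}"
        using finite_R by (simp add: psubset_card_mono)
      then obtain w t where "w \<in> weyl_group S" "t \<in> S" "?\<gamma> = w t"
        using less.hyps \<gamma> by blast
      then have "\<beta> = (root_refl s \<circ> w) t" by (metis comp_apply root_refl_root_refl)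
      then show ?thesis using weyl_group.step[OF s(1) \<open>w \<in> weyl_group S\<close>] \<open>t \<in> S\<close> by blast
    qed
  qed
qed

lemma finite_weyl_group: "finite (weyl_group S)"
proof -
  have "inj_on (\<lambda>w. restrict w R) (weyl_group S)"
  proof (rule inj_onI)
    fix v w assume "v \<in> weyl_group S" "w \<in> weyl_group S" "restrict v R = restrict w R"
    then have "linear v" "linear w" "\<forall>x\<in>R. v x = w x"
      using orthogonal_transformation_weyl_group orthogonal_transformation_linear
      by (blast, blast, metis restrict_apply')
    then show "v = w" using linear_eq_on_span span_R by (metis UNIV_I ext)
  qed
  moreover have "(\<lambda>w. restrict w R) ` weyl_group S \<subseteq> (\<Pi>\<^sub>E x\<in>R. R)"
    using weyl_group_image_subset[of _ S R, OF _ root_refl_simple_image_R]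
    by (auto simp: restrict_PiE_iff image_subset_iff)
  ultimately show ?thesis
    using finite_R by (meson finite_PiE finite_imageD finite_subset)
qed

lemma weyl_group_image_R: "w \<in> weyl_group S \<Longrightarrow> w ` R = R"
  using weyl_group_image_eq root_refl_simple_image_R finite_R by blast

lemma root_refl_image_weyl_invariant:
  assumes "\<alpha> \<in> R" "\<And>w. w \<in> weyl_group S \<Longrightarrow> w ` Q = Q"
  shows "root_refl \<alpha> ` Q = Q"
proof -
  obtain \<beta> where "positive_root \<beta>" "root_refl \<beta> = root_refl \<alpha>"
    using positive_root_or_uminus[OF assms(1)] root_refl_uminus by metis
  moreover obtain w s where w: "w \<in> weyl_group S" "s \<in> S" "\<beta> = w s"
    using positive_root_conj_simple_root \<open>positive_root \<beta>\<close> by blast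
  ultimately have "root_refl \<alpha> ` Q = root_refl (w s) ` w ` Q" using assms(2) by simp
  also have "\<dots> = w ` root_refl s ` Q"
    using root_refl_orthogonal_transformation_comp[OF orthogonal_transformation_weyl_group[OF w(1)]]
    by (metis image_comp)
  also have "\<dots> = Q" using assms(2) root_refl_in_weyl_group[OF w(2)] w(1) by simp
  finally show ?thesis .
qed

lemma fund_chamber_orthogonal_root_frontier:
  assumes "x \<in> fund_chamber S" "\<beta> \<in> R" "x \<bullet> \<beta> = 0"
  shows "x \<in> frontier (fund_chamber S)"
proof -
  obtain \<gamma> where "positive_root \<gamma>" "x \<bullet> \<gamma> = 0"
    using positive_root_or_uminus[OF assms(2)] assms(3)
    by (metis inner_minus_right neg_0_equal_iff_equal)
  then obtain c where c: "\<gamma> \<in> R" "\<gamma> = (\<Sum>s\<in>S. c s *\<^sub>R s)" "\<forall>s\<in>S. 0 \<le> c s"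
    by (auto simp: positive_root_def)
  have "(\<Sum>s\<in>S. c s * (x \<bullet> s)) = x \<bullet> \<gamma>" unfolding c(2) by (simp add: inner_sum_right)
  then have sum0: "(\<Sum>s\<in>S. c s * (x \<bullet> s)) = 0" using \<open>x \<bullet> \<gamma> = 0\<close> by simp
  have nonneg: "0 \<le> c s * (x \<bullet> s)" if "s \<in> S" for s
  proof -
    have "0 \<le> x \<bullet> s" using assms(1) that by (simp add: fund_chamber_def)
    then show ?thesis using c(3) that by simp
  qed
  have "\<exists>s\<in>S. c s \<noteq> 0"
  proof (rule ccontr)
    assume "\<not> ?thesis"
    then have "\<gamma> = 0" using c(2) by simp
    then show False using c(1) zero_notin_R by simp
  qed
  then obtain s where "s \<in> S" "c s \<noteq> 0" by blast
  moreover have "\<forall>s\<in>S. c s * (x \<bullet> s) = 0" using sum_nonneg_eq_0_iff[OF finite_S nonneg] sum0 by simp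
  ultimately have "x \<bullet> s = 0" by (metis mult_eq_0_iff)
  then show ?thesis
    using fund_chamber_frontier \<open>s \<in> S\<close> assms(1) S_subset_R zero_notin_R by blast
qed

lemma weyl_orbit_vertex_notin_hyp:
  assumes "finite \<Lambda>" "\<Lambda> \<subseteq> fund_chamber S" "nondegenerate S (convex hull weyl_orbit S \<Lambda>)"
    and "\<alpha> \<in> R" "v extreme_point_of convex hull weyl_orbit S \<Lambda>"
  shows "v \<notin> hyp \<alpha>"
proof
  assume "v \<in> hyp \<alpha>"
  let ?P = "convex hull weyl_orbit S \<Lambda>"
  obtain w x where w: "w \<in> weyl_group S" "x \<in> \<Lambda>" "v = w x"
    using extreme_point_of_convex_hull[OF assms(5)] by (auto simp: weyl_orbit_def)
  have ot: "orthogonal_transformation w" using orthogonal_transformation_weyl_group w(1) by blast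
  obtain \<beta> where "\<beta> \<in> R" "\<alpha> = w \<beta>" using weyl_group_image_R[OF w(1)] assms(4) by blast
  then have "x \<bullet> \<beta> = 0"
    using \<open>v \<in> hyp \<alpha>\<close> w(3) ot by (simp add: hyp_def orthogonal_transformation_def)
  then have "x \<in> frontier (fund_chamber S)"
    by (rule fund_chamber_orthogonal_root_frontier[OF subsetD[OF assms(2) w(2)] \<open>\<beta> \<in> R\<close>])
  moreover have "x extreme_point_of ?P"
    using extreme_point_of_linear_image[OF orthogonal_transformation_linear[OF ot]
        orthogonal_transformation_inj[OF ot], of x ?P]
      weyl_group_image_weyl_orbit_hull[OF w(1) finite_weyl_group assms(1)] assms(5) w(3) by simp
  ultimately show False using assms(3) by (simp add: nondegenerate_def)
qed

end

theorem lemma2p2: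
  fixes R S \<Lambda> F :: "'a::euclidean_space set" and \<alpha> :: 'a
  assumes "root_system R" and "simple_system R S"
    and "finite \<Lambda>" and "\<Lambda> \<subseteq> fund_chamber S"
    and "aff_dim (convex hull (\<Union>w\<in>weyl_group S. w ` \<Lambda>)) = DIM('a)"
    and "F face_of convex hull (\<Union>w\<in>weyl_group S. w ` \<Lambda>)" and "F \<noteq> {}"
    and "\<alpha> \<in> R"
  shows "(root_refl \<alpha> ` F = F \<longleftrightarrow> barycenter F \<in> hyp \<alpha>)
    \<and> (barycenter F \<in> hyp \<alpha> \<longleftrightarrow> rel_interior F \<inter> hyp \<alpha> \<noteq> {})
    \<and> (nondegenerate S (convex hull (\<Union>w\<in>weyl_group S. w ` \<Lambda>)) \<longrightarrow>
        (rel_interior F \<inter> hyp \<alpha> \<noteq> {} \<longleftrightarrow> F \<inter> hyp \<alpha> \<noteq> {})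
        \<and> (root_refl \<alpha> ` F = F \<longrightarrow>
             (\<forall>F' l. F' facet_of (convex hull (\<Union>w\<in>weyl_group S. w ` \<Lambda>)) \<and> F \<subseteq> F'
                \<and> outward_normal l F' (convex hull (\<Union>w\<in>weyl_group S. w ` \<Lambda>)) \<longrightarrow> l \<bullet> \<alpha> = 0)))"
proof -
  interpret simple_root_system R S using assms(1,2) by unfold_locales
  define P where "P = convex hull weyl_orbit S \<Lambda>"
  have "polytope P"
    unfolding P_def polytope_def using finite_weyl_orbit finite_weyl_group assms(3) by blast
  have "root_refl \<alpha> ` P = P"
    unfolding P_def using root_refl_image_weyl_invariant[OF assms(8)]
      weyl_group_image_weyl_orbit_hull[OF _ finite_weyl_group assms(3)] by blast
  have "\<alpha> \<noteq> 0" using assms(8) zero_notin_R by blast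
  have "aff_dim P = DIM('a)" "F face_of P" using assms(5,6) by (simp_all add: P_def weyl_orbit_def)
  have vertices: "v \<notin> hyp \<alpha>" if "nondegenerate S P" "v extreme_point_of P" for v
    using weyl_orbit_vertex_notin_hyp assms(3,4,8) that unfolding P_def by blast
  show ?thesis
    using reflection_stable_face_iff[OF \<open>polytope P\<close> \<open>root_refl \<alpha> ` P = P\<close> \<open>F face_of P\<close> assms(7)]
      face_rel_interior_meets_hyp_iff[OF \<open>polytope P\<close> \<open>F face_of P\<close> vertices]
      reflection_stable_face_facet_normal_orthogonal[OF \<open>aff_dim P = DIM('a)\<close> \<open>polytope P\<close>
        \<open>\<alpha> \<noteq> 0\<close> \<open>root_refl \<alpha> ` P = P\<close> \<open>F face_of P\<close> assms(7) vertices]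
    unfolding P_def weyl_orbit_def by blast
qed

end
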